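(* Suppose Assumption 1 holds. For every nonnegative measurable function $\rho:\mathcal{X}\times\Theta\to\mathbb{R}$ and every $x\in\mathcal{X}$, \[\int_\Theta\rho(x,\theta)\det\big(\nabla^2_\theta\mathcal{L}(\theta;x)\big)\mathbf{1}\{(x,\theta)\in\Psi_{\mathrm{SSOSP}}\}\,d\theta=\sigma^d\int_{\mathbb{R}^d}\rho\big(x,\widehat{\theta}(x,w)\big)\mathbf{1}\{(x,w)\in\Omega_{\mathrm{SSOSP}}\}\,dw.\]
   Context: Setting: $(\mathcal{X},\nu_\mathcal{X})$ is a measurable space, $\{P_\theta:\theta\in\Theta\}$ a parametric family with $\Theta\subseteq\mathbb{R}^d$, $\mathcal{R}:\Theta\to\mathbb{R}$ a regularization function, $\sigma>0$ fixed. All functions are measurable. Assumption 1 (regularity): $\Theta$ is a convex open subset of $\mathbb{R}^d$; each $P_\theta$ has a density $f(x;\theta)>0$ with respect to $\nu_\mathcal{X}$; and for each $x\in\mathcal{X}$ the map $\theta\mapsto\mathcal{L}(\theta;x):=-\log f(x;\theta)+\mathcal{R}(\theta)$ is continuously twice differentiable. For $w\in\mathbb{R}^d$ write $\mathcal{L}(\theta;x,w):=\mathcal{L}(\theta;x)+\sigma w^\top\theta$. Let $\widehat{\theta}:\mathcal{X}\times\mathbb{R}^d\to\Theta$ be a measurable map. A point $\theta$ is a strict second-order stationary point (SSOSP) of $\mathcal{L}(\cdot;x,w)$ if $\nabla_\theta\mathcal{L}(\theta;x,w)=0$ and $\nabla^2_\theta\mathcal{L}(\theta;x,w)\succ0$.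 For $\theta\in\Theta$ let $\mathcal{X}_\theta=\{x\in\mathcal{X}:\text{for some }w\in\mathbb{R}^d,\ \theta=\widehat{\theta}(x,w)\text{ and }\theta\text{ is a SSOSP of }\mathcal{L}(\cdot;x,w)\}$. Define $\Omega_{\mathrm{SSOSP}}=\{(x,w)\in\mathcal{X}\times\mathbb{R}^d:\widehat{\theta}(x,w)\text{ is a SSOSP of }\mathcal{L}(\cdot;x,w)\}$ and $\Psi_{\mathrm{SSOSP}}=\{(x,\theta)\in\mathcal{X}\times\Theta:x\in\mathcal{X}_\theta\}$. *)

theory Defs
  imports "HOL-Analysis.Analysis"
begin

definition grad :: "(real^'n \<Rightarrow> real) \<Rightarrow> real^'n \<Rightarrow> real^'n" where
  "grad g \<theta> = (\<chi> i. frechet_derivative g (at \<theta>) (axis i 1))"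

definition hess :: "(real^'n \<Rightarrow> real) \<Rightarrow> real^'n \<Rightarrow> real^'n^'n" where
  "hess g \<theta> = jacobian (grad g) (at \<theta>)"

definition posdef :: "real^'n^'n \<Rightarrow> bool" where
  "posdef A \<longleftrightarrow> (\<forall>v. v \<noteq> 0 \<longrightarrow> v \<bullet> (A *v v) > 0)"

definition SSOSP :: "(real^'n \<Rightarrow> real) \<Rightarrow> real^'n \<Rightarrow> bool" where
  "SSOSP g \<theta> \<longleftrightarrow> grad g \<theta> = 0 \<and> posdef (hess g \<theta>)"

definition Lfun :: "('x \<Rightarrow> real^'n \<Rightarrow> real) \<Rightarrow> (real^'n \<Rightarrow> real) \<Rightarrow> 'x \<Rightarrow> real^'n \<Rightarrow> real" where
  "Lfun f R x \<theta> = - ln (f x \<theta>) + R \<theta>"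

definition Lw :: "('x \<Rightarrow> real^'n \<Rightarrow> real) \<Rightarrow> (real^'n \<Rightarrow> real) \<Rightarrow> real \<Rightarrow> 'x \<Rightarrow> real^'n \<Rightarrow> real^'n \<Rightarrow> real" where
  "Lw f R \<sigma> x w \<theta> = Lfun f R x \<theta> + \<sigma> * (w \<bullet> \<theta>)"

text \<open>Assumption 1 (regularity), including that each P_theta has density f(.;theta) > 0.\<close>
definition assumption1 :: "'x measure \<Rightarrow> (real^'n) set \<Rightarrow> ('x \<Rightarrow> real^'n \<Rightarrow> real) \<Rightarrow> (real^'n \<Rightarrow> real) \<Rightarrow> bool" where
  "assumption1 M \<Theta> f R \<longleftrightarrow>
     convex \<Theta> \<and> open \<Theta> \<and>
     (\<forall>\<theta>\<in>\<Theta>. (\<lambda>x. f x \<theta>) \<in> borel_measurable M \<and>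
              (\<forall>x\<in>space M. f x \<theta> > 0) \<and>
              (\<integral>\<^sup>+ x. ennreal (f x \<theta>) \<partial>M) = 1) \<and>
     (\<forall>x\<in>space M.
        (\<forall>\<theta>\<in>\<Theta>. Lfun f R x differentiable (at \<theta>) \<and> grad (Lfun f R x) differentiable (at \<theta>)) \<and>
        continuous_on \<Theta> (hess (Lfun f R x)))"

definition X_theta :: "'x measure \<Rightarrow> ('x \<Rightarrow> real^'n \<Rightarrow> real) \<Rightarrow> (real^'n \<Rightarrow> real) \<Rightarrow> real
     \<Rightarrow> ('x \<Rightarrow> real^'n \<Rightarrow> real^'n) \<Rightarrow> real^'n \<Rightarrow> 'x set" where
  "X_theta M f R \<sigma> th \<theta> =
     {x \<in> space M. \<exists>w. \<theta> = th x w \<and> SSOSP (Lw f R \<sigma> x w) \<theta>}"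

definition Omega_SSOSP :: "'x measure \<Rightarrow> ('x \<Rightarrow> real^'n \<Rightarrow> real) \<Rightarrow> (real^'n \<Rightarrow> real) \<Rightarrow> real
     \<Rightarrow> ('x \<Rightarrow> real^'n \<Rightarrow> real^'n) \<Rightarrow> ('x \<times> (real^'n)) set" where
  "Omega_SSOSP M f R \<sigma> th = {(x, w). x \<in> space M \<and> SSOSP (Lw f R \<sigma> x w) (th x w)}"

definition Psi_SSOSP :: "'x measure \<Rightarrow> (real^'n) set \<Rightarrow> ('x \<Rightarrow> real^'n \<Rightarrow> real) \<Rightarrow> (real^'n \<Rightarrow> real) \<Rightarrow> real
     \<Rightarrow> ('x \<Rightarrow> real^'n \<Rightarrow> real^'n) \<Rightarrow> ('x \<times> (real^'n)) set" where
  "Psi_SSOSP M \<Theta> f R \<sigma> th = {(x, \<theta>). x \<in> space M \<and> \<theta> \<in> \<Theta> \<and> x \<in> X_theta M f R \<sigma> th \<theta>}"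

end

theory Submission
  imports Defs
begin

text \<open>
  Fix \<open>x\<close> and write \<open>L\<close> for \<open>L(\<cdot>;x)\<close>. Because the perturbation \<open>\<sigma> w\<bullet>\<theta>\<close> is linear in \<open>\<theta>\<close>,
  the point \<open>\<theta>\<close> is a strict second-order stationary point of \<open>L(\<cdot>;x,w)\<close> iff \<open>w = g \<theta>\<close> with
  \<open>g \<theta> = -(1/\<sigma>) grad L \<theta>\<close> and \<open>hess L \<theta>\<close> is positive definite. On the \<open>x\<close>-slice of \<open>\<Psi>\<close> the
  estimator \<open>th x\<close> is therefore a left inverse of \<open>g\<close>, so \<open>g\<close> is injective there and maps it onto
  the \<open>x\<close>-slice of \<open>\<Omega>\<close>. The Jacobian of \<open>g\<close> is \<open>-(1/\<sigma>) hess L\<close>, whose absolute determinant is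
  \<open>\<sigma>\<^sup>-\<^sup>d det (hess L)\<close> by positive definiteness, so the identity is the change-of-variables formula
  for \<open>g\<close>.
\<close>

lemma nn_integral_indicator_lborel_eq_integral_on:
  fixes f :: "'a::euclidean_space \<Rightarrow> real"
  assumes meas: "(\<lambda>x. indicator S x * f x) \<in> borel_measurable borel"
    and nonneg: "\<And>x. 0 \<le> f x"
  shows "(\<integral>\<^sup>+x. ennreal (indicator S x * f x) \<partial>lborel)
       = (if f integrable_on S then ennreal (integral S f) else \<infinity>)"
proof (cases "f integrable_on S")
  case True
  then show ?thesis
    using nn_integral_has_integral_lebesgue[of S f] nonneg by (simp add: integrable_integral)
next
  case False
  have "(\<integral>\<^sup>+x. ennreal (indicator S x * f x) \<partial>lborel) = \<infinity>"
  proof (rule ccontr)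
    assume "(\<integral>\<^sup>+x. ennreal (indicator S x * f x) \<partial>lborel) \<noteq> \<infinity>"
    then have "(\<lambda>x. indicator S x * f x) integrable_on UNIV"
      using meas nonneg by (intro nn_integral_integrable_on) (auto simp: top.not_eq_extremum)
    moreover have "(\<lambda>x. indicator S x * f x) = (\<lambda>x. if x \<in> S then f x else 0)"
      by (auto simp: indicator_def)
    ultimately have "f integrable_on S"
      by (simp add: integrable_restrict_UNIV)
    with False show False by simp
  qed
  with False show ?thesis by simp
qed

lemma nn_integral_change_of_variables_wellorder:
  fixes g :: "real^'m::{finite,wellorder} \<Rightarrow> real^'m::_" and F :: "real^'m::_ \<Rightarrow> real"
  assumes S: "S \<in> sets lebesgue"
    and der: "\<And>x. x \<in> S \<Longrightarrow> (g has_derivative g' x) (at x within S)"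
    and inj: "inj_on g S"
    and nonneg: "\<And>y. 0 \<le> F y"
    and meas_S: "(\<lambda>x. indicator S x * (\<bar>det (matrix (g' x))\<bar> * F (g x))) \<in> borel_measurable borel"
    and meas_gS: "(\<lambda>y. indicator (g ` S) y * F y) \<in> borel_measurable borel"
  shows "(\<integral>\<^sup>+x. ennreal (indicator S x * (\<bar>det (matrix (g' x))\<bar> * F (g x))) \<partial>lborel)
       = (\<integral>\<^sup>+y. ennreal (indicator (g ` S) y * F y) \<partial>lborel)"
proof -
  define h where "h x = \<bar>det (matrix (g' x))\<bar> * F (g x)" for x
  have h_nonneg: "0 \<le> h x" for x by (simp add: h_def nonneg)
  \<comment> \<open>The library's change of variables is for vector-valued integrands, hence the detour via \<open>real^1\<close>.\<close>
  have vec_h: "(\<lambda>x. \<bar>det (matrix (g' x))\<bar> *\<^sub>R (vec (F (g x)) :: real^1)) = (\<lambda>x. vec (h x))"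
    by (auto simp: h_def vec_eq_iff)
  have "F absolutely_integrable_on g ` S \<longleftrightarrow> h absolutely_integrable_on S"
    using absolutely_integrable_change_of_variables[OF S der inj, of "\<lambda>y. vec (F y) :: real^1"]
    unfolding vec_h absolutely_integrable_on_1_iff by simp
  then have integrable_iff: "F integrable_on g ` S \<longleftrightarrow> h integrable_on S"
    by (simp add: absolutely_integrable_on_iff_nonneg nonneg h_nonneg)
  have "integral (g ` S) F = integral S h" if "h integrable_on S"
  proof -
    have "integral (g ` S) (\<lambda>y. vec (F y) :: real^1) = integral S (\<lambda>x. vec (h x) :: real^1)"
      using integral_change_of_variables[OF S der inj, of "\<lambda>y. vec (F y) :: real^1"] that integrable_iff
      unfolding vec_h absolutely_integrable_on_1_iff
      by (simp add: absolutely_integrable_on_iff_nonneg nonneg h_nonneg)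
    then show ?thesis
      unfolding integral_on_1_eq by (simp add: vec_eq_iff)
  qed
  then show ?thesis
    unfolding h_def[symmetric]
    using nn_integral_indicator_lborel_eq_integral_on[OF meas_S[folded h_def] h_nonneg]
      nn_integral_indicator_lborel_eq_integral_on[OF meas_gS nonneg] integrable_iff
    by simp
qed

lemma emeasure_lborel_box_cart:
  fixes l u :: "real^'n"
  assumes "\<And>i. l $ i \<le> u $ i"
  shows "emeasure lborel (box l u) = (\<Prod>i\<in>UNIV. u $ i - l $ i)"
proof -
  have Basis: "Basis = range (\<lambda>i::'n. axis i (1::real))"
    by (auto simp: Basis_vec_def)
  have "inj (\<lambda>i::'n. axis i (1::real))"
    by (auto simp: inj_def axis_eq_axis)
  have "emeasure lborel (box l u) = (\<Prod>b\<in>Basis. (u - l) \<bullet> b)"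
    by (rule emeasure_lborel_box) (auto simp: Basis inner_axis assms)
  with \<open>inj (\<lambda>i. axis i 1)\<close> show ?thesis
    by (simp add: Basis prod.reindex inner_axis)
qed

definition vec_reindex :: "('b \<Rightarrow> 'a) \<Rightarrow> 'c^'a \<Rightarrow> 'c^'b" where
  "vec_reindex r v = (\<chi> i. v $ r i)"

lemma vec_reindex_nth [simp]: "vec_reindex r v $ i = v $ r i"
  by (simp add: vec_reindex_def)

lemma vec_reindex_inv_cancel [simp]:
  fixes r :: "'b::finite \<Rightarrow> 'a::finite" and v :: "'c^'a" and w :: "'c^'b"
  assumes "bij r"
  shows "vec_reindex (inv r) (vec_reindex r v) = v" "vec_reindex r (vec_reindex (inv r) w) = w"
  using assms by (simp_all add: vec_eq_iff bij_inv_eq_iff bij_is_inj bij_is_surj surj_f_inv_f)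

lemma bounded_linear_vec_reindex: "bounded_linear (vec_reindex r :: real^'a \<Rightarrow> real^'b)"
  unfolding linear_conv_bounded_linear[symmetric] by (rule linearI) (simp_all add: vec_eq_iff)

lemma vec_reindex_measurable [measurable]:
  "(vec_reindex r :: real^'a \<Rightarrow> real^'b) \<in> borel_measurable borel"
  by (intro borel_measurable_continuous_onI linear_continuous_on bounded_linear_vec_reindex)

lemma vec_reindex_vimage_box:
  assumes "bij r"
  shows "vec_reindex r -` box l u = box (vec_reindex (inv r) l) (vec_reindex (inv r) (u :: real^'b))"
  using assms by (auto simp: mem_box_cart bij_is_surj surj_f_inv_f) (metis bij_inv_eq_iff)+

lemma lborel_vec_reindex:
  assumes "bij r"
  shows "distr lborel borel (vec_reindex r :: real^'a \<Rightarrow> real^'b) = lborel"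
proof (rule lborel_eqI[symmetric])
  fix l u :: "real^'b"
  assume Basis_le: "\<And>b. b \<in> Basis \<Longrightarrow> l \<bullet> b \<le> u \<bullet> b"
  have le: "l $ i \<le> u $ i" for i
    using Basis_le[of "axis i 1"] by (simp add: inner_axis)
  have "emeasure (distr lborel borel (vec_reindex r)) (box l u) = emeasure lborel (vec_reindex r -` box l u)"
    by (simp add: emeasure_distr)
  also have "\<dots> = (\<Prod>i\<in>UNIV. u $ inv r i - l $ inv r i)"
    using assms le by (simp add: vec_reindex_vimage_box emeasure_lborel_box_cart)
  also have "\<dots> = (\<Prod>j\<in>UNIV. u $ j - l $ j)"
    using prod.reindex_bij_betw[OF bij_imp_bij_inv[OF assms], of "\<lambda>j. u $ j - l $ j"] by simp
  also have "\<dots> = emeasure lborel (box l u)"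
    using le by (simp add: emeasure_lborel_box_cart)
  finally show "emeasure (distr lborel borel (vec_reindex r)) (box l u) = (\<Prod>b\<in>Basis. (u - l) \<bullet> b)"
    using Basis_le by simp
qed simp

lemma nn_integral_lborel_vec_reindex:
  assumes "bij r" "\<phi> \<in> borel_measurable borel"
  shows "(\<integral>\<^sup>+u. \<phi> u \<partial>lborel) = (\<integral>\<^sup>+v. \<phi> (vec_reindex r v :: real^'b) \<partial>(lborel :: (real^'a) measure))"
  using assms by (subst lborel_vec_reindex[OF assms(1), symmetric]) (simp add: nn_integral_distr)

lemma det_reindex:
  fixes A :: "'c::comm_ring_1^'a::finite^'a" and r :: "'b::finite \<Rightarrow> 'a"
  assumes r: "bij r"
  shows "det (\<chi> i j. A $ r i $ r j) = det A"
proof -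
  \<comment> \<open>The vacuous test keeps \<open>\<Phi>\<close> literally in the shape used by \<open>bij_betw_permutations\<close> and \<open>permutes_bij\<close>.\<close>
  define \<Phi> where "\<Phi> q = (\<lambda>x. if x \<in> UNIV then r (q (inv r x)) else x)" for q :: "'b \<Rightarrow> 'b"
  have bij_\<Phi>: "bij_betw \<Phi> {q. q permutes UNIV} {p. p permutes UNIV}"
    unfolding \<Phi>_def using bij_betw_permutations[of r UNIV UNIV] r by (simp add: bij_def)
  have sign_\<Phi>: "sign (\<Phi> q) = sign q" if "q permutes UNIV" for q
    using permutes_bij_finite.sign_p'[of q UNIV UNIV r "inv r"] that r
    by (simp add: \<Phi>_def permutes_bij_finite_def permutes_bij_finite_axioms_def permutes_bij_def bij_def)
  have prod_\<Phi>: "(\<Prod>a\<in>UNIV. A $ a $ \<Phi> q a) = (\<Prod>i\<in>UNIV. A $ r i $ r (q i))" for q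
    using prod.reindex_bij_betw[of r UNIV UNIV "\<lambda>a. A $ a $ \<Phi> q a"] r
    by (simp add: \<Phi>_def bij_def)
  have "det A = (\<Sum>q | q permutes UNIV. of_int (sign (\<Phi> q)) * (\<Prod>a\<in>UNIV. A $ a $ \<Phi> q a))"
    unfolding det_def
    using sum.reindex_bij_betw[OF bij_\<Phi>, of "\<lambda>p. of_int (sign p) * (\<Prod>a\<in>UNIV. A $ a $ p a)"] by simp
  also have "\<dots> = det (\<chi> i j. A $ r i $ r j)"
    unfolding det_def by (intro sum.cong) (simp_all add: sign_\<Phi> prod_\<Phi>)
  finally show ?thesis ..
qed

lemma det_matrix_vec_reindex_conj:
  fixes D :: "real^'a::finite \<Rightarrow> real^'a" and r :: "'b::finite \<Rightarrow> 'a"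
  assumes "bij r"
  shows "det (matrix (vec_reindex r \<circ> D \<circ> vec_reindex (inv r))) = det (matrix D)"
proof -
  have "inv r k = j \<longleftrightarrow> k = r j" for j k
    using assms by (metis bij_inv_eq_iff)
  then have axis_reindex: "vec_reindex (inv r) (axis j 1 :: real^'b) = axis (r j) 1" for j
    by (simp add: vec_eq_iff axis_def)
  have "matrix (vec_reindex r \<circ> D \<circ> vec_reindex (inv r)) = (\<chi> i j. matrix D $ r i $ r j)"
    unfolding matrix_def by (simp add: axis_reindex)
  then show ?thesis
    using det_reindex[OF assms] by simp
qed

text \<open>
  The library's change of variables is stated for index types of class \<open>wellorder\<close>. Every finite
  index type has a well-ordered copy, and reindexing coordinates along the copy preserves Lebesgue
  measure and Jacobian determinants.
\<close>
typedef 'a wo_index = "UNIV :: 'a set" by simp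

instance wo_index :: (finite) finite
proof
  have "UNIV = range (Abs_wo_index :: 'a \<Rightarrow> 'a wo_index)"
    by (metis Rep_wo_index_inverse surj_def)
  then show "finite (UNIV :: 'a wo_index set)"
    by (metis finite finite_imageI)
qed

definition index_rank :: "'a::finite wo_index \<Rightarrow> nat" where
  "index_rank x = to_nat_on (UNIV :: 'a set) (Rep_wo_index x)"

lemma inj_index_rank: "inj index_rank"
  unfolding index_rank_def inj_def
  by (metis Rep_wo_index_inject UNIV_I countable_finite finite inj_on_to_nat_on inj_onD)

instantiation wo_index :: (finite) wellorder
begin

definition less_eq_wo_index_def: "x \<le> y \<longleftrightarrow> index_rank x \<le> index_rank y"
definition less_wo_index_def: "x < y \<longleftrightarrow> index_rank x < index_rank y"

instance
proof
  fix x y z :: "'a wo_index"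
  show "x < y \<longleftrightarrow> x \<le> y \<and> \<not> y \<le> x" "x \<le> x" "x \<le> y \<or> y \<le> x"
    by (auto simp: less_eq_wo_index_def less_wo_index_def)
  show "x \<le> y \<Longrightarrow> y \<le> z \<Longrightarrow> x \<le> z"
    by (simp add: less_eq_wo_index_def)
  show "x \<le> y \<Longrightarrow> y \<le> x \<Longrightarrow> x = y"
    by (simp add: less_eq_wo_index_def injD[OF inj_index_rank])
next
  fix P :: "'a wo_index \<Rightarrow> bool" and a
  assume step: "\<And>x. (\<And>y. y < x \<Longrightarrow> P y) \<Longrightarrow> P x"
  have "\<forall>a. index_rank a = n \<longrightarrow> P a" for n
    by (induction n rule: less_induct) (metis step less_wo_index_def)
  then show "P a" by blast
qed

end

lemma bij_Rep_wo_index: "bij Rep_wo_index"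
  by (metis Rep_wo_index_inject Rep_wo_index_cases UNIV_I bijI injI surjI)

lemma has_derivative_vec_reindex_conj:
  fixes g :: "real^'a \<Rightarrow> real^'a" and r :: "'b::finite \<Rightarrow> 'a"
  assumes "bij r" and "y \<in> S'" and S': "vec_reindex (inv r) ` S' \<subseteq> S"
    and der: "\<And>x. x \<in> S \<Longrightarrow> (g has_derivative g' x) (at x within S)"
  shows "(vec_reindex r \<circ> g \<circ> vec_reindex (inv r) has_derivative
          vec_reindex r \<circ> g' (vec_reindex (inv r) y) \<circ> vec_reindex (inv r)) (at y within S')"
proof -
  have "((\<lambda>y. g (vec_reindex (inv r) y)) has_derivative
          (\<lambda>h. g' (vec_reindex (inv r) y) (vec_reindex (inv r) h))) (at y within S')"
    by (rule has_derivative_in_compose2[OF der S' \<open>y \<in> S'\<close>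
          bounded_linear_imp_has_derivative[OF bounded_linear_vec_reindex]])
  from bounded_linear.has_derivative[OF bounded_linear_vec_reindex this]
  show ?thesis by (simp add: comp_def)
qed

lemma nn_integral_change_of_variables:
  fixes g :: "real^'n::finite \<Rightarrow> real^'n" and F :: "real^'n \<Rightarrow> real"
  assumes S: "S \<in> sets borel"
    and der: "\<And>x. x \<in> S \<Longrightarrow> (g has_derivative g' x) (at x within S)"
    and inj: "inj_on g S"
    and nonneg: "\<And>y. 0 \<le> F y"
    and meas_S: "(\<lambda>x. indicator S x * (\<bar>det (matrix (g' x))\<bar> * F (g x))) \<in> borel_measurable borel"
    and meas_gS: "(\<lambda>y. indicator (g ` S) y * F y) \<in> borel_measurable borel"
  shows "(\<integral>\<^sup>+x. ennreal (indicator S x * (\<bar>det (matrix (g' x))\<bar> * F (g x))) \<partial>lborel)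
       = (\<integral>\<^sup>+y. ennreal (indicator (g ` S) y * F y) \<partial>lborel)"
proof -
  let ?r = "Rep_wo_index :: 'n wo_index \<Rightarrow> 'n"
  define T :: "real^'n \<Rightarrow> real^'n wo_index" where "T = vec_reindex ?r"
  define T' :: "real^'n wo_index \<Rightarrow> real^'n" where "T' = vec_reindex (inv ?r)"
  have bij: "bij ?r" "bij (inv ?r)"
    by (simp_all add: bij_Rep_wo_index bij_imp_bij_inv)
  have [simp]: "T (T' y) = y" "T' (T x) = x" for x y
    using vec_reindex_inv_cancel[OF bij(1)] by (simp_all add: T_def T'_def)
  have inj_T: "inj T"
    by (rule inj_on_inverseI[where g = T']) simp
  have inj_T': "inj T'"
    by (rule inj_on_inverseI[where g = T]) simp
  define S' where "S' = T' -` S"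
  define \<phi> where "\<phi> = (\<lambda>x. indicator S x * (\<bar>det (matrix (g' x))\<bar> * F (g x)))"
  define \<psi> where "\<psi> = (\<lambda>y. indicator (g ` S) y * F y)"
  have S': "S' \<in> sets lebesgue"
    unfolding S'_def T'_def using measurable_sets_borel[OF vec_reindex_measurable[of "inv ?r"] S] by simp
  have der': "((T \<circ> g \<circ> T') has_derivative T \<circ> g' (T' y) \<circ> T') (at y within S')" if "y \<in> S'" for y
    unfolding T_def T'_def using bij that der
    by (intro has_derivative_vec_reindex_conj) (auto simp: S'_def T'_def)
  have inj': "inj_on (T \<circ> g \<circ> T') S'"
  proof (rule inj_onI)
    fix a b assume "a \<in> S'" "b \<in> S'" "(T \<circ> g \<circ> T') a = (T \<circ> g \<circ> T') b"
    then have "T' a = T' b"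
      using inj injD[OF inj_T] by (auto simp: S'_def dest: inj_onD)
    then show "a = b"
      by (rule injD[OF inj_T'])
  qed
  have image': "(T \<circ> g \<circ> T') ` S' = T' -` (g ` S)"
  proof
    show "(T \<circ> g \<circ> T') ` S' \<subseteq> T' -` (g ` S)"
      by (auto simp: S'_def)
    show "T' -` (g ` S) \<subseteq> (T \<circ> g \<circ> T') ` S'"
    proof
      fix y assume "y \<in> T' -` (g ` S)"
      then obtain x where "x \<in> S" "g x = T' y" by auto
      then have "T x \<in> S'" "y = (T \<circ> g \<circ> T') (T x)"
        by (auto simp: S'_def)
      then show "y \<in> (T \<circ> g \<circ> T') ` S'" by blast
    qed
  qed
  have det': "det (matrix (T \<circ> g' (T' y) \<circ> T')) = det (matrix (g' (T' y)))" for y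
    unfolding T_def T'_def by (rule det_matrix_vec_reindex_conj[OF bij(1)])
  have \<phi>': "indicator S' y * (\<bar>det (matrix (T \<circ> g' (T' y) \<circ> T'))\<bar> * (F \<circ> T') ((T \<circ> g \<circ> T') y))
      = \<phi> (T' y)" for y
    by (simp add: \<phi>_def det' S'_def indicator_def)
  have \<psi>': "indicator ((T \<circ> g \<circ> T') ` S') y * (F \<circ> T') y = \<psi> (T' y)" for y
    unfolding image' by (simp add: \<psi>_def indicator_def)
  have meas: "\<phi> \<in> borel_measurable borel" "\<psi> \<in> borel_measurable borel"
    using meas_S meas_gS by (simp_all add: \<phi>_def \<psi>_def)
  have "(\<integral>\<^sup>+y. ennreal (\<phi> (T' y)) \<partial>lborel) = (\<integral>\<^sup>+y. ennreal (\<psi> (T' y)) \<partial>lborel)"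
    using nn_integral_change_of_variables_wellorder[OF S' der' inj', of "F \<circ> T'"]
    unfolding \<phi>' \<psi>' using nonneg meas
    by (simp add: T'_def measurable_compose[OF vec_reindex_measurable])
  then show ?thesis
    using nn_integral_lborel_vec_reindex[OF bij(2)] meas by (simp add: T'_def \<phi>_def \<psi>_def)
qed

lemma det_scaleR: "det (c *\<^sub>R A) = c ^ CARD('n) * det (A :: real^'n^'n)"
proof -
  have "c *\<^sub>R A = (\<chi> i. c *s A $ i)"
    by (simp add: vec_eq_iff)
  then show ?thesis
    by (simp add: det_rows_mul)
qed

lemma continuous_on_det:
  fixes A :: "'a::topological_space \<Rightarrow> real^'n^'n"
  assumes "continuous_on T A"
  shows "continuous_on T (\<lambda>t. det (A t))"
proof -
  have entries: "continuous_on T (\<lambda>t. A t $ i $ j)" for i j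
    using assms by (intro continuous_intros)
  show ?thesis
    unfolding det_def by (intro continuous_intros entries)
qed

lemma posdef_det_nonzero:
  assumes "posdef A"
  shows "det A \<noteq> 0"
proof -
  have "x = 0" if "A *v x = 0" for x
    using assms that by (auto simp: posdef_def)
  then show ?thesis
    by (metis invertible_det_nz invertible_left_inverse matrix_left_invertible_ker)
qed

lemma posdef_combination_with_id:
  fixes A :: "real^'n^'n"
  assumes "posdef A" "0 \<le> t" "t \<le> 1"
  shows "posdef ((1 - t) *\<^sub>R A + t *\<^sub>R mat 1)"
  unfolding posdef_def
proof (intro allI impI)
  fix x :: "real^'n" assume "x \<noteq> 0"
  then have "x \<bullet> (A *v x) > 0" "x \<bullet> x > 0"
    using assms(1) by (auto simp: posdef_def)
  then have "(1 - t) * (x \<bullet> (A *v x)) + t * (x \<bullet> x) > 0"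
    using assms(2,3) by (cases "t = 1") (auto intro: add_pos_nonneg)
  then show "x \<bullet> (((1 - t) *\<^sub>R A + t *\<^sub>R mat 1) *v x) > 0"
    by (simp add: matrix_vector_mult_add_rdistrib scaleR_matrix_vector_assoc[symmetric] inner_add_right)
qed

lemma posdef_det_pos:
  assumes "posdef A"
  shows "det A > 0"
proof (rule ccontr)
  define M where "M t = (1 - t) *\<^sub>R A + t *\<^sub>R mat 1" for t :: real
  assume "\<not> det A > 0"
  then have "det (M 0) \<le> 0" "0 \<le> det (M 1)"
    by (simp_all add: M_def)
  moreover have "continuous_on {0..1} (\<lambda>t. det (M t))"
    unfolding M_def by (intro continuous_on_det continuous_intros)
  ultimately obtain t where t: "0 \<le> t" "t \<le> 1" "det (M t) = 0"
    using IVT'[of "\<lambda>t. det (M t)" 0 0 1] by auto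
  then show False
    using posdef_det_nonzero[OF posdef_combination_with_id[OF assms t(1,2)]] by (simp add: M_def)
qed

lemma posdef_iff_sphere:
  fixes A :: "real^'n^'n"
  shows "posdef A \<longleftrightarrow> (\<forall>v \<in> sphere 0 1. v \<bullet> (A *v v) > 0)"
proof
  assume sphere: "\<forall>v \<in> sphere 0 1. v \<bullet> (A *v v) > 0"
  show "posdef A"
    unfolding posdef_def
  proof (intro allI impI)
    fix v :: "real^'n" assume "v \<noteq> 0"
    then have "v /\<^sub>R norm v \<in> sphere 0 1"
      by simp
    with sphere have "(v /\<^sub>R norm v) \<bullet> (A *v (v /\<^sub>R norm v)) > 0"
      by blast
    then show "v \<bullet> (A *v v) > 0"
      by (simp add: matrix_vector_mult_scaleR zero_less_mult_iff)
  qed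
next
  show "posdef A \<Longrightarrow> \<forall>v \<in> sphere 0 1. v \<bullet> (A *v v) > 0"
    unfolding posdef_def by (metis mem_sphere_0 norm_zero zero_neq_one)
qed

lemma open_posdef: "open {A :: real^'n^'n. posdef A}"
proof -
  define T where "T = {p :: (real^'n) \<times> (real^'n^'n). fst p \<bullet> (snd p *v fst p) \<le> 0}"
  have "continuous_on UNIV (\<lambda>p :: (real^'n) \<times> (real^'n^'n). fst p \<bullet> (snd p *v fst p))"
    unfolding inner_vec_def matrix_vector_mult_def by (intro continuous_intros)
  then have "closed T"
    unfolding T_def by (intro closed_Collect_le) (auto intro: continuous_intros)
  then have "closed {A. \<exists>v. v \<in> sphere 0 1 \<and> (v, A) \<in> T}"
    by (rule closed_compact_projection[OF compact_sphere])
  moreover have "- {A :: real^'n^'n. posdef A} = {A. \<exists>v. v \<in> sphere 0 1 \<and> (v, A) \<in> T}"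
    by (force simp: posdef_iff_sphere T_def not_less)
  ultimately show ?thesis
    by (metis closed_Compl double_complement open_closed)
qed

lemma grad_has_derivative_hess:
  assumes "grad L differentiable (at \<theta>)"
  shows "(grad L has_derivative (\<lambda>h. hess L \<theta> *v h)) (at \<theta>)"
  using assms by (simp add: hess_def jacobian_works)

lemma grad_add_linear:
  assumes "L differentiable (at \<theta>)"
  shows "grad (\<lambda>t. L t + c * (w \<bullet> t)) \<theta> = grad L \<theta> + c *\<^sub>R w"
proof -
  have "((\<lambda>t. L t + c * (w \<bullet> t)) has_derivative (\<lambda>h. frechet_derivative L (at \<theta>) h + c * (w \<bullet> h))) (at \<theta>)"
    using assms[unfolded frechet_derivative_works] by (intro derivative_eq_intros) auto
  then have "frechet_derivative (\<lambda>t. L t + c * (w \<bullet> t)) (at \<theta>)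
      = (\<lambda>h. frechet_derivative L (at \<theta>) h + c * (w \<bullet> h))"
    by (rule frechet_derivative_at[symmetric])
  then show ?thesis
    by (simp add: grad_def vec_eq_iff inner_axis)
qed

lemma hess_add_linear:
  assumes "open U" "\<theta> \<in> U" "\<And>t. t \<in> U \<Longrightarrow> L differentiable (at t)"
    and "grad L differentiable (at \<theta>)"
  shows "hess (\<lambda>t. L t + c * (w \<bullet> t)) \<theta> = hess L \<theta>"
proof -
  have "((\<lambda>t. grad L t + c *\<^sub>R w) has_derivative (\<lambda>h. hess L \<theta> *v h)) (at \<theta>)"
    using grad_has_derivative_hess[OF assms(4)] by (intro derivative_eq_intros) auto
  then have "(grad (\<lambda>t. L t + c * (w \<bullet> t)) has_derivative (\<lambda>h. hess L \<theta> *v h)) (at \<theta>)"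
    by (rule has_derivative_transform_within_open[OF _ assms(1,2)]) (simp add: grad_add_linear assms(3))
  then show ?thesis
    by (simp add: hess_def jacobian_def frechet_derivative_at[symmetric] matrix_of_matrix_vector_mul)
qed

lemma SSOSP_add_linear_iff:
  assumes "open U" "\<theta> \<in> U" "\<And>t. t \<in> U \<Longrightarrow> L differentiable (at t)"
    and "grad L differentiable (at \<theta>)" "\<sigma> \<noteq> 0"
  shows "SSOSP (\<lambda>t. L t + \<sigma> * (w \<bullet> t)) \<theta> \<longleftrightarrow> w = - (1 / \<sigma>) *\<^sub>R grad L \<theta> \<and> posdef (hess L \<theta>)"
proof -
  have "grad L \<theta> + \<sigma> *\<^sub>R w = 0 \<longleftrightarrow> w = - (1 / \<sigma>) *\<^sub>R grad L \<theta>"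
    using \<open>\<sigma> \<noteq> 0\<close> by (auto simp: algebra_simps eq_neg_iff_add_eq_0[symmetric])
  then show ?thesis
    using assms by (simp add: SSOSP_def grad_add_linear hess_add_linear)
qed

lemma borel_measurable_extend_continuous_on:
  fixes f :: "'a::topological_space \<Rightarrow> 'b::topological_space"
  assumes "open U" "continuous_on U f"
  shows "(\<lambda>x. if x \<in> U then f x else c) \<in> borel_measurable borel"
  using assms by (intro borel_measurable_continuous_on_if continuous_on_const) auto

lemma sets_borel_fixed_points:
  fixes g \<psi> :: "'a::euclidean_space \<Rightarrow> 'a"
  assumes U: "open U" and g: "continuous_on U g" and \<psi>: "\<psi> \<in> borel_measurable borel"
  shows "{\<theta> \<in> U. \<psi> (g \<theta>) = \<theta>} \<in> sets borel" "{w. \<psi> w \<in> U \<and> g (\<psi> w) = w} \<in> sets borel"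
proof -
  define g0 where "g0 \<theta> = (if \<theta> \<in> U then g \<theta> else 0)" for \<theta>
  note [measurable] = \<psi>
  have [measurable]: "U \<in> sets borel"
    using U by simp
  have [measurable]: "g0 \<in> borel_measurable borel"
    unfolding g0_def using U g by (rule borel_measurable_extend_continuous_on)
  have "{\<theta> \<in> U. \<psi> (g \<theta>) = \<theta>} = U \<inter> {\<theta> \<in> space borel. \<psi> (g0 \<theta>) = id \<theta>}"
    by (auto simp: g0_def)
  also have "\<dots> \<in> sets borel"
    by measurable
  finally show "{\<theta> \<in> U. \<psi> (g \<theta>) = \<theta>} \<in> sets borel" .
  have "{w. \<psi> w \<in> U \<and> g (\<psi> w) = w} = \<psi> -` U \<inter> {w \<in> space borel. g0 (\<psi> w) = id w}"
    by (auto simp: g0_def)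
  also have "\<dots> \<in> sets borel"
    by measurable
  finally show "{w. \<psi> w \<in> U \<and> g (\<psi> w) = w} \<in> sets borel" .
qed

lemma nn_integral_change_of_variables_left_inverse:
  fixes g \<psi> :: "real^'n \<Rightarrow> real^'n" and J :: "real^'n \<Rightarrow> real^'n^'n" and F :: "real^'n \<Rightarrow> real"
  assumes U: "open U"
    and der: "\<And>\<theta>. \<theta> \<in> U \<Longrightarrow> (g has_derivative (\<lambda>h. J \<theta> *v h)) (at \<theta>)"
    and J: "continuous_on U J"
    and \<psi>: "\<psi> \<in> borel_measurable borel"
    and F: "F \<in> borel_measurable borel" "\<And>w. 0 \<le> F w"
  shows "(\<integral>\<^sup>+\<theta>. ennreal (indicator {\<theta> \<in> U. \<psi> (g \<theta>) = \<theta>} \<theta> * (\<bar>det (J \<theta>)\<bar> * F (g \<theta>))) \<partial>lborel)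
       = (\<integral>\<^sup>+w. ennreal (indicator {w. \<psi> w \<in> U \<and> g (\<psi> w) = w} w * F w) \<partial>lborel)"
proof -
  define S where "S = {\<theta> \<in> U. \<psi> (g \<theta>) = \<theta>}"
  define g0 where "g0 \<theta> = (if \<theta> \<in> U then g \<theta> else 0)" for \<theta>
  define d0 where "d0 \<theta> = (if \<theta> \<in> U then det (J \<theta>) else 0)" for \<theta>
  note [measurable] = F(1)
  have g: "continuous_on U g"
    using der by (meson continuous_at_imp_continuous_on has_derivative_continuous)
  note [measurable] = sets_borel_fixed_points[OF U g \<psi>, folded S_def]
  have [measurable]: "g0 \<in> borel_measurable borel" "d0 \<in> borel_measurable borel"
    unfolding g0_def d0_def using U g continuous_on_det[OF J]
    by (auto intro: borel_measurable_extend_continuous_on)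
  have gS_eq: "g ` S = {w. \<psi> w \<in> U \<and> g (\<psi> w) = w}"
    by (auto simp: S_def image_iff) metis
  have "(\<integral>\<^sup>+\<theta>. ennreal (indicator S \<theta> * (\<bar>det (matrix (\<lambda>h. J \<theta> *v h))\<bar> * F (g \<theta>))) \<partial>lborel)
      = (\<integral>\<^sup>+w. ennreal (indicator (g ` S) w * F w) \<partial>lborel)"
  proof (rule nn_integral_change_of_variables)
    show "inj_on g S"
      by (rule inj_on_inverseI[where g = \<psi>]) (simp add: S_def)
    show "(g has_derivative (\<lambda>h. J \<theta> *v h)) (at \<theta> within S)" if "\<theta> \<in> S" for \<theta>
      using der that by (auto simp: S_def intro: has_derivative_at_withinI)
    have "(\<lambda>\<theta>. indicator S \<theta> * (\<bar>det (matrix (\<lambda>h. J \<theta> *v h))\<bar> * F (g \<theta>)))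
        = (\<lambda>\<theta>. indicator S \<theta> * (\<bar>d0 \<theta>\<bar> * F (g0 \<theta>)))"
      by (simp add: fun_eq_iff matrix_of_matrix_vector_mul S_def d0_def g0_def indicator_def)
    then show "(\<lambda>\<theta>. indicator S \<theta> * (\<bar>det (matrix (\<lambda>h. J \<theta> *v h))\<bar> * F (g \<theta>))) \<in> borel_measurable borel"
      by simp
  qed (use F in \<open>simp_all add: gS_eq S_def[symmetric]\<close>)
  then show ?thesis
    by (simp add: matrix_of_matrix_vector_mul S_def[symmetric] gS_eq[symmetric])
qed

lemma nn_integral_SSOSP_change_of_variables:
  fixes L :: "real^'n \<Rightarrow> real" and \<psi> :: "real^'n \<Rightarrow> real^'n" and \<rho> :: "real^'n \<Rightarrow> real"
  assumes \<Theta>: "open \<Theta>"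
    and diff: "\<And>\<theta>. \<theta> \<in> \<Theta> \<Longrightarrow> L differentiable (at \<theta>)"
    and diff_grad: "\<And>\<theta>. \<theta> \<in> \<Theta> \<Longrightarrow> grad L differentiable (at \<theta>)"
    and cont: "continuous_on \<Theta> (hess L)"
    and \<sigma>: "\<sigma> > 0"
    and \<psi>: "\<psi> \<in> borel_measurable borel" "\<And>w. \<psi> w \<in> \<Theta>"
    and \<rho>: "\<rho> \<in> borel_measurable borel" "\<And>\<theta>. 0 \<le> \<rho> \<theta>"
  shows "(\<integral>\<^sup>+\<theta>. ennreal (\<rho> \<theta> * det (hess L \<theta>)
              * indicator {\<theta> \<in> \<Theta>. \<exists>w. \<theta> = \<psi> w \<and> SSOSP (\<lambda>t. L t + \<sigma> * (w \<bullet> t)) \<theta>} \<theta>) \<partial>lborel)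
       = ennreal (\<sigma> ^ CARD('n)) *
         (\<integral>\<^sup>+w. ennreal (\<rho> (\<psi> w) * indicator {w. SSOSP (\<lambda>t. L t + \<sigma> * (w \<bullet> t)) (\<psi> w)} w) \<partial>lborel)"
proof -
  define U where "U = {\<theta> \<in> \<Theta>. posdef (hess L \<theta>)}"
  define g where "g \<theta> = - (1 / \<sigma>) *\<^sub>R grad L \<theta>" for \<theta>
  define J where "J \<theta> = - (1 / \<sigma>) *\<^sub>R hess L \<theta>" for \<theta>
  have SSOSP_iff: "SSOSP (\<lambda>t. L t + \<sigma> * (w \<bullet> t)) \<theta> \<longleftrightarrow> w = g \<theta> \<and> \<theta> \<in> U" if "\<theta> \<in> \<Theta>" for \<theta> w
    using SSOSP_add_linear_iff[OF \<Theta> that diff diff_grad[OF that]] \<sigma> that by (auto simp: g_def U_def)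
  have U: "open U"
    using continuous_on_open_vimage[OF \<Theta>, THEN iffD1, OF cont] open_posdef
    by (auto simp: U_def vimage_def Int_def conj_commute)
  have g_der: "(g has_derivative (\<lambda>h. J \<theta> *v h)) (at \<theta>)" if "\<theta> \<in> U" for \<theta>
  proof -
    have "\<theta> \<in> \<Theta>"
      using that by (simp add: U_def)
    from bounded_linear.has_derivative[OF bounded_linear_scaleR_right
        grad_has_derivative_hess[OF diff_grad[OF this]], of "- (1 / \<sigma>)"]
    show ?thesis
      by (simp add: g_def[abs_def] J_def scaleR_matrix_vector_assoc)
  qed
  have J: "continuous_on U J"
    unfolding J_def by (intro continuous_intros continuous_on_subset[OF cont]) (auto simp: U_def)
  have "continuous_on U g"
    using g_der by (meson continuous_at_imp_continuous_on has_derivative_continuous)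
  note [measurable] = \<psi>(1) \<rho>(1) sets_borel_fixed_points(2)[OF U this \<psi>(1)]
  have fixed_points: "{\<theta> \<in> \<Theta>. \<exists>w. \<theta> = \<psi> w \<and> SSOSP (\<lambda>t. L t + \<sigma> * (w \<bullet> t)) \<theta>}
      = {\<theta> \<in> U. \<psi> (g \<theta>) = \<theta>}"
    using SSOSP_iff by (auto simp: U_def)
  have stationary: "{w. SSOSP (\<lambda>t. L t + \<sigma> * (w \<bullet> t)) (\<psi> w)} = {w. \<psi> w \<in> U \<and> g (\<psi> w) = w}"
    using SSOSP_iff[OF \<psi>(2)] \<psi>(2) by (auto simp: U_def)
  \<comment> \<open>Positive definiteness makes \<open>det (hess L)\<close> positive, which removes the absolute value.\<close>
  have jacobian: "\<rho> \<theta> * det (hess L \<theta>) * indicator {\<theta> \<in> U. \<psi> (g \<theta>) = \<theta>} \<theta>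
      = indicator {\<theta> \<in> U. \<psi> (g \<theta>) = \<theta>} \<theta> * (\<bar>det (J \<theta>)\<bar> * (\<sigma> ^ CARD('n) * \<rho> (\<psi> (g \<theta>))))"
    for \<theta>
  proof (cases "\<theta> \<in> U \<and> \<psi> (g \<theta>) = \<theta>")
    case True
    then have "det (hess L \<theta>) > 0"
      by (simp add: U_def posdef_det_pos)
    moreover have "\<bar>det (J \<theta>)\<bar> = \<bar>det (hess L \<theta>)\<bar> / \<sigma> ^ CARD('n)"
      unfolding J_def det_scaleR using \<sigma> by (simp add: abs_mult power_abs power_one_over)
    ultimately show ?thesis
      using True \<sigma> by simp
  qed simp
  have "(\<integral>\<^sup>+\<theta>. ennreal (\<rho> \<theta> * det (hess L \<theta>)
          * indicator {\<theta> \<in> \<Theta>. \<exists>w. \<theta> = \<psi> w \<and> SSOSP (\<lambda>t. L t + \<sigma> * (w \<bullet> t)) \<theta>} \<theta>) \<partial>lborel)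
      = (\<integral>\<^sup>+\<theta>. ennreal (indicator {\<theta> \<in> U. \<psi> (g \<theta>) = \<theta>} \<theta>
          * (\<bar>det (J \<theta>)\<bar> * (\<sigma> ^ CARD('n) * \<rho> (\<psi> (g \<theta>))))) \<partial>lborel)"
    by (simp add: fixed_points jacobian)
  also have "\<dots> = (\<integral>\<^sup>+w. ennreal (indicator {w. \<psi> w \<in> U \<and> g (\<psi> w) = w} w
          * (\<sigma> ^ CARD('n) * \<rho> (\<psi> w))) \<partial>lborel)"
    using U g_der J \<sigma> \<rho>(2) by (intro nn_integral_change_of_variables_left_inverse) auto
  also have "\<dots> = (\<integral>\<^sup>+w. ennreal (\<sigma> ^ CARD('n)) * ennreal (\<rho> (\<psi> w) * indicator {w. \<psi> w \<in> U \<and> g (\<psi> w) = w} w) \<partial>lborel)"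
    using \<sigma> \<rho>(2) by (intro nn_integral_cong) (simp add: ennreal_mult'[symmetric] mult_ac)
  also have "\<dots> = ennreal (\<sigma> ^ CARD('n)) * (\<integral>\<^sup>+w. ennreal (\<rho> (\<psi> w) * indicator {w. \<psi> w \<in> U \<and> g (\<psi> w) = w} w) \<partial>lborel)"
    by (rule nn_integral_cmult) measurable
  finally show ?thesis
    unfolding stationary .
qed

theorem lemma5:
  fixes M :: "'x measure" and \<Theta> :: "(real^'n) set"
    and f :: "'x \<Rightarrow> real^'n \<Rightarrow> real" and R :: "real^'n \<Rightarrow> real" and \<sigma> :: real
    and th :: "'x \<Rightarrow> real^'n \<Rightarrow> real^'n"
    and \<rho> :: "'x \<Rightarrow> real^'n \<Rightarrow> real" and x :: 'x
  assumes A1: "assumption1 M \<Theta> f R"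
    and f_meas: "(\<lambda>(x, \<theta>). f x \<theta>) \<in> borel_measurable (M \<Otimes>\<^sub>M lborel)"
    and R_meas: "R \<in> borel_measurable lborel"
    and sigma_pos: "\<sigma> > 0"
    and th_meas: "(\<lambda>(x, w). th x w) \<in> borel_measurable (M \<Otimes>\<^sub>M lborel)"
    and th_range: "\<And>x w. x \<in> space M \<Longrightarrow> th x w \<in> \<Theta>"
    and rho_meas: "(\<lambda>(x, \<theta>). \<rho> x \<theta>) \<in> borel_measurable (M \<Otimes>\<^sub>M lborel)"
    and rho_nonneg: "\<And>x \<theta>. \<rho> x \<theta> \<ge> 0"
    and x: "x \<in> space M"
  shows "(\<integral>\<^sup>+ \<theta>. ennreal (\<rho> x \<theta> * det (hess (Lfun f R x) \<theta>)
                     * indicator (Psi_SSOSP M \<Theta> f R \<sigma> th) (x, \<theta>)) * indicator \<Theta> \<theta> \<partial>lborel)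
       = ennreal (\<sigma> ^ CARD('n)) *
         (\<integral>\<^sup>+ w. ennreal (\<rho> x (th x w) * indicator (Omega_SSOSP M f R \<sigma> th) (x, w)) \<partial>lborel)"
proof -
  \<comment> \<open>Only the \<open>x\<close>-slices enter.\<close>
  define Psi_slice where "Psi_slice = {\<theta> \<in> \<Theta>. \<exists>w. \<theta> = th x w \<and> SSOSP (Lw f R \<sigma> x w) \<theta>}"
  have Lw_eq: "Lw f R \<sigma> x w = (\<lambda>t. Lfun f R x t + \<sigma> * (w \<bullet> t))" for w
    by (simp add: fun_eq_iff Lw_def)
  have "ennreal (\<rho> x \<theta> * det (hess (Lfun f R x) \<theta>) * indicator (Psi_SSOSP M \<Theta> f R \<sigma> th) (x, \<theta>))
          * indicator \<Theta> \<theta>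
      = ennreal (\<rho> x \<theta> * det (hess (Lfun f R x) \<theta>) * indicator Psi_slice \<theta>)" for \<theta>
    using x by (auto simp: Psi_slice_def Psi_SSOSP_def X_theta_def indicator_def)
  moreover have "indicator (Omega_SSOSP M f R \<sigma> th) (x, w)
      = (indicator {w. SSOSP (Lw f R \<sigma> x w) (th x w)} w :: real)" for w
    using x by (simp add: Omega_SSOSP_def indicator_def)
  moreover have "(\<integral>\<^sup>+ \<theta>. ennreal (\<rho> x \<theta> * det (hess (Lfun f R x) \<theta>) * indicator Psi_slice \<theta>) \<partial>lborel)
      = ennreal (\<sigma> ^ CARD('n)) *
         (\<integral>\<^sup>+ w. ennreal (\<rho> x (th x w) * indicator {w. SSOSP (Lw f R \<sigma> x w) (th x w)} w) \<partial>lborel)"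
    unfolding Psi_slice_def Lw_eq
  proof (rule nn_integral_SSOSP_change_of_variables)
    show "th x \<in> borel_measurable borel" "\<rho> x \<in> borel_measurable borel"
      using measurable_Pair2[OF th_meas x] measurable_Pair2[OF rho_meas x] by simp_all
  qed (use A1 x sigma_pos th_range rho_nonneg in \<open>auto simp: assumption1_def\<close>)
  ultimately show ?thesis
    by simp
qed

end
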